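(* Let $M$ be a nonuniform matroid on a finite set $S$. Then $M$ is irreducible with respect to free product if and only if the lattice $\mathcal D(M)$ contains no nontrivial pinchpoint.
   Context: For a matroid $M$ on $S$ write $\rho_M$ for its rank function, $\rho(M)=\rho_M(S)$, $\nu_M(A)=|A|-\rho_M(A)$, $\lambda_M(A)=\rho(M)-\rho_M(A)$. For matroids $M$ on $S$ and $N$ on $T$ with $S\cap T=\emptyset$, the free product $M\mathbin{\Box} N$ is the matroid on $S\cup T$ whose independent sets are those $A$ with $A\cap S$ independent in $M$ and $\lambda_M(A\cap S)\geq\nu_N(A\cap T)$; it is associative. A nonempty matroid $M$ is irreducible if every factorization of $M$ as a free product of matroids contains $M$ itself as a factor. A cyclic flat is a flat that is a union of circuits. $\mathcal D(M)$ is the complete sublattice of the Boolean algebra $2^S$ generated by all cyclic flats of $M$ (closed under arbitrary unions and intersections, so it contains $\emptyset$ as the empty union and $S$ as the empty intersection). An element $x$ of a poset $P$ is a pinchpoint if every element of $P$ is comparable to $x$; it is nontrivial if it is neither minimal nor maximal in $P$. *)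

theory Defs
  imports Main
begin

type_synonym 'a matroid = "'a set \<times> 'a set set"

definition gnd :: "'a matroid \<Rightarrow> 'a set" where "gnd M = fst M"
definition indep :: "'a matroid \<Rightarrow> 'a set set" where "indep M = snd M"

definition is_matroid :: "'a matroid \<Rightarrow> bool" where
  "is_matroid M \<longleftrightarrow> finite (gnd M) \<and> {} \<in> indep M
     \<and> (\<forall>A \<in> indep M. A \<subseteq> gnd M)
     \<and> (\<forall>A B. A \<in> indep M \<and> B \<subseteq> A \<longrightarrow> B \<in> indep M)
     \<and> (\<forall>A B. A \<in> indep M \<and> B \<in> indep M \<and> card A < card B
           \<longrightarrow> (\<exists>x \<in> B - A. insert x A \<in> indep M))"

definition rank :: "'a matroid \<Rightarrow> 'a set \<Rightarrow> nat" where
  "rank M A = Max (card ` {B. B \<subseteq> A \<and> B \<in> indep M})"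

definition nullity :: "'a matroid \<Rightarrow> 'a set \<Rightarrow> nat" where
  "nullity M A = card A - rank M A"

definition corank :: "'a matroid \<Rightarrow> 'a set \<Rightarrow> nat" where
  "corank M A = rank M (gnd M) - rank M A"

definition free_product :: "'a matroid \<Rightarrow> 'a matroid \<Rightarrow> 'a matroid" where
  "free_product M N = (gnd M \<union> gnd N,
     {A. A \<subseteq> gnd M \<union> gnd N \<and> A \<inter> gnd M \<in> indep M
         \<and> corank M (A \<inter> gnd M) \<ge> nullity N (A \<inter> gnd N)})"

definition empty_matroid :: "'a matroid" where
  "empty_matroid = ({}, {{}})"

text \<open>Free product of a list of factors (well-defined up to bracketing by associativity)\<close>
definition free_product_list :: "'a matroid list \<Rightarrow> 'a matroid" where
  "free_product_list Ns = foldr free_product Ns empty_matroid"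

definition irreducible_matroid :: "'a matroid \<Rightarrow> bool" where
  "irreducible_matroid M \<longleftrightarrow> gnd M \<noteq> {} \<and>
     (\<forall>Ns. (\<forall>N \<in> set Ns. is_matroid N)
        \<and> (\<forall>i < length Ns. \<forall>j < length Ns. i \<noteq> j \<longrightarrow> gnd (Ns ! i) \<inter> gnd (Ns ! j) = {})
        \<and> free_product_list Ns = M
        \<longrightarrow> M \<in> set Ns)"

definition uniform_matroid :: "'a matroid \<Rightarrow> bool" where
  "uniform_matroid M \<longleftrightarrow> (\<exists>r::nat. indep M = {A. A \<subseteq> gnd M \<and> card A \<le> r})"

definition circuit :: "'a matroid \<Rightarrow> 'a set \<Rightarrow> bool" where
  "circuit M C \<longleftrightarrow> C \<subseteq> gnd M \<and> C \<notin> indep M \<and> (\<forall>D \<subset> C. D \<in> indep M)"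

definition flat :: "'a matroid \<Rightarrow> 'a set \<Rightarrow> bool" where
  "flat M F \<longleftrightarrow> F \<subseteq> gnd M \<and> (\<forall>x \<in> gnd M - F. rank M (insert x F) > rank M F)"

definition cyclic_flat :: "'a matroid \<Rightarrow> 'a set \<Rightarrow> bool" where
  "cyclic_flat M F \<longleftrightarrow> flat M F \<and> F = \<Union>{C. circuit M C \<and> C \<subseteq> F}"

text \<open>D(M): complete sublattice of 2^S generated by the cyclic flats
  (closed under arbitrary unions and intersections; the empty intersection is S)\<close>
definition cf_lattice :: "'a matroid \<Rightarrow> 'a set set" where
  "cf_lattice M = \<Inter>{L. L \<subseteq> Pow (gnd M) \<and> {F. cyclic_flat M F} \<subseteq> L
      \<and> (\<forall>X \<subseteq> L. \<Union>X \<in> L) \<and> (\<forall>X \<subseteq> L. gnd M \<inter> \<Inter>X \<in> L)}"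

definition pinchpoint :: "'a set set \<Rightarrow> 'a set \<Rightarrow> bool" where
  "pinchpoint P x \<longleftrightarrow> x \<in> P \<and> (\<forall>y \<in> P. y \<subseteq> x \<or> x \<subseteq> y)"

definition nontrivial_elem :: "'a set set \<Rightarrow> 'a set \<Rightarrow> bool" where
  "nontrivial_elem P x \<longleftrightarrow> x \<in> P \<and> (\<exists>y \<in> P. y \<subset> x) \<and> (\<exists>y \<in> P. x \<subset> y)"

end

theory Submission
  imports Defs
begin

text \<open>
  Call \<open>X\<close> a splitting set of \<open>M\<close> if \<open>{} \<noteq> X \<subset> S\<close> and every cyclic flat of \<open>M\<close> is comparable
  with \<open>X\<close>. Such an \<open>X\<close> factors \<open>M\<close> as \<open>M|X \<box> M/X\<close>: independence in the free product means that
  \<open>I \<inter> X\<close> is independent and \<open>|I| \<le> \<rho>(I \<union> X)\<close>; were such an \<open>I\<close> dependent in \<open>M\<close>, the closure of a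
  circuit \<open>C \<subseteq> I\<close> would be a cyclic flat neither contained in \<open>X\<close> (as \<open>I \<inter> X\<close> is independent) nor
  containing \<open>X\<close> (as \<open>\<rho>(I \<union> X) \<ge> |I| > \<rho>(I)\<close>). Conversely, if
  \<open>M = A \<box> B\<close> with both factors nonempty, then \<open>gnd A\<close> is a splitting set: were a cyclic flat
  \<open>Z\<close> to contain \<open>y \<in> gnd B\<close> but miss \<open>x \<in> gnd A\<close>, a basis of \<open>Z - y\<close> could be extended by
  \<open>x\<close>, hence equally by \<open>y\<close>, although \<open>y\<close> is not a coloop of \<open>Z\<close>.

  A nontrivial pinchpoint of \<open>D(M)\<close> is a splitting set. Conversely, a splitting set \<open>X\<close> yields
  the pinchpoints \<open>\<Union>{Z \<subseteq> X}\<close> and \<open>\<Inter>{Z \<supseteq> X}\<close> of \<open>D(M)\<close>; both are trivial only if every cyclic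
  flat is \<open>{}\<close> or \<open>S\<close>, which makes \<open>M\<close> uniform.
\<close>

section \<open>Rank, closure and circuits\<close>

definition cl :: "'a matroid \<Rightarrow> 'a set \<Rightarrow> 'a set" where
  "cl M A = {x \<in> gnd M. rank M (insert x A) = rank M A}"

locale matroid =
  fixes M :: "'a matroid"
  assumes is_matroid: "is_matroid M"
begin

lemma finite_gnd: "finite (gnd M)"
  using is_matroid by (simp add: is_matroid_def)

lemma indep_empty: "{} \<in> indep M"
  using is_matroid by (simp add: is_matroid_def)

lemma indep_subset_gnd: "I \<in> indep M \<Longrightarrow> I \<subseteq> gnd M"
  using is_matroid by (simp add: is_matroid_def)

lemma indep_subset: "I \<in> indep M \<Longrightarrow> J \<subseteq> I \<Longrightarrow> J \<in> indep M"
  using is_matroid by (simp add: is_matroid_def)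

lemma indep_augment:
  "I \<in> indep M \<Longrightarrow> J \<in> indep M \<Longrightarrow> card I < card J \<Longrightarrow> \<exists>x \<in> J - I. insert x I \<in> indep M"
  using is_matroid unfolding is_matroid_def by blast

lemma finite_subset_gnd: "A \<subseteq> gnd M \<Longrightarrow> finite A"
  using finite_gnd finite_subset by blast

lemma finite_indep: "I \<in> indep M \<Longrightarrow> finite I"
  by (simp add: finite_subset_gnd indep_subset_gnd)

lemma finite_indep_subsets: "finite {I. I \<subseteq> A \<and> I \<in> indep M}"
  by (rule finite_subset[of _ "Pow (gnd M)"]) (use indep_subset_gnd finite_gnd in auto)

lemma card_le_rank: "I \<subseteq> A \<Longrightarrow> I \<in> indep M \<Longrightarrow> card I \<le> rank M A"
  unfolding rank_def using finite_indep_subsets by (intro Max_ge) auto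

lemma exists_basis:
  obtains B where "B \<subseteq> A" "B \<in> indep M" "card B = rank M A"
proof -
  have "rank M A \<in> card ` {B. B \<subseteq> A \<and> B \<in> indep M}"
    unfolding rank_def using finite_indep_subsets indep_empty by (intro Max_in) auto
  then show ?thesis
    using that by auto
qed

lemma rank_mono: "A \<subseteq> A' \<Longrightarrow> rank M A \<le> rank M A'"
  by (metis card_le_rank exists_basis order_trans)

lemma rank_le_card: "finite A \<Longrightarrow> rank M A \<le> card A"
  by (metis card_mono exists_basis)

lemma rank_indep: "I \<in> indep M \<Longrightarrow> rank M I = card I"
  by (meson card_le_rank finite_indep le_antisym order_refl rank_le_card)

lemma indep_iff_card_le_rank: "finite A \<Longrightarrow> A \<in> indep M \<longleftrightarrow> card A \<le> rank M A"
  by (metis card_seteq exists_basis le_refl rank_indep)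

lemma extend_to_basis:
  assumes "I \<subseteq> A" "I \<in> indep M"
  obtains J where "I \<subseteq> J" "J \<subseteq> A" "J \<in> indep M" "card J = rank M A"
proof -
  obtain J where J: "J \<subseteq> A" "J \<in> indep M" "I \<subseteq> J"
    and maximal: "\<And>K. K \<subseteq> A \<Longrightarrow> K \<in> indep M \<Longrightarrow> J \<subseteq> K \<Longrightarrow> J = K"
    using finite_has_maximal2[OF finite_indep_subsets, of I A] assms by auto
  have "\<not> card J < rank M A"
  proof
    assume "card J < rank M A"
    obtain B where "B \<subseteq> A" "B \<in> indep M" "card B = rank M A"
      using exists_basis .
    then obtain x where "x \<in> B - J" "insert x J \<in> indep M"
      using indep_augment[OF J(2)] \<open>card J < rank M A\<close> by metis
    then show False
      using maximal[of "insert x J"] \<open>B \<subseteq> A\<close> J(1) by blast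
  qed
  then show ?thesis
    using that J card_le_rank[OF J(1,2)] by simp
qed

lemma rank_insert_le: "rank M (insert x A) \<le> Suc (rank M A)"
proof -
  obtain B where B: "B \<subseteq> insert x A" "B \<in> indep M" "card B = rank M (insert x A)"
    using exists_basis .
  have "card (B - {x}) \<le> rank M A"
    using B by (intro card_le_rank) (auto intro: indep_subset)
  moreover have "card B \<le> Suc (card (B - {x}))"
    by (cases "x \<in> B") (simp_all add: card_Suc_Diff1 finite_indep[OF B(2)])
  ultimately show ?thesis
    using B by simp
qed

lemma rank_Un_le: "finite W \<Longrightarrow> rank M (W \<union> A) \<le> rank M A + card W"
proof (induction W rule: finite_induct)
  case (insert w W)
  then show ?case
    using rank_insert_le[of w "W \<union> A"] by simp
qed simp

lemma rank_submod: "rank M (A \<union> B) + rank M (A \<inter> B) \<le> rank M A + rank M B"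
proof -
  obtain I where I: "I \<subseteq> A \<inter> B" "I \<in> indep M" "card I = rank M (A \<inter> B)"
    using exists_basis .
  obtain J where J: "I \<subseteq> J" "J \<subseteq> A \<union> B" "J \<in> indep M" "card J = rank M (A \<union> B)"
    using extend_to_basis[of I "A \<union> B"] I by auto
  have "finite J"
    using finite_indep J(3) .
  have "card (J \<inter> A) \<le> rank M A" "card (J \<inter> B) \<le> rank M B"
    by (auto intro!: card_le_rank indep_subset[OF J(3)])
  moreover have "card (J \<inter> A) + card (J \<inter> B) = card J + card (J \<inter> A \<inter> B)"
  proof -
    have "(J \<inter> A) \<union> (J \<inter> B) = J" "(J \<inter> A) \<inter> (J \<inter> B) = J \<inter> A \<inter> B"
      using J(2) by auto
    then show ?thesis
      using card_Un_Int[of "J \<inter> A" "J \<inter> B"] \<open>finite J\<close> by simp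
  qed
  moreover have "card I \<le> card (J \<inter> A \<inter> B)"
    using I J \<open>finite J\<close> by (intro card_mono) auto
  ultimately show ?thesis
    using I J by linarith
qed

lemma subset_cl: "A \<subseteq> gnd M \<Longrightarrow> A \<subseteq> cl M A"
  unfolding cl_def by (auto simp: insert_absorb)

lemma cl_mono: assumes "A \<subseteq> A'" shows "cl M A \<subseteq> cl M A'"
proof
  fix x assume "x \<in> cl M A"
  then have x: "x \<in> gnd M" "rank M (insert x A) = rank M A"
    unfolding cl_def by auto
  have "insert x A \<union> A' = insert x A'"
    using assms by blast
  then have "rank M (insert x A') + rank M (insert x A \<inter> A') \<le> rank M (insert x A) + rank M A'"
    using rank_submod[of "insert x A" A'] by simp
  moreover have "rank M A \<le> rank M (insert x A \<inter> A')" "rank M A' \<le> rank M (insert x A')"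
    using assms by (auto intro: rank_mono)
  ultimately show "x \<in> cl M A'"
    using x unfolding cl_def by simp
qed

lemma rank_Un_cl: assumes "W \<subseteq> cl M A" shows "rank M (W \<union> A) = rank M A"
proof -
  have "finite W"
    using assms finite_subset_gnd unfolding cl_def by blast
  then show ?thesis
    using assms
  proof (induction W rule: finite_induct)
    case (insert w W)
    then have "w \<in> cl M (W \<union> A)"
      using cl_mono[of A "W \<union> A"] by blast
    then show ?case
      using insert by (simp add: cl_def)
  qed simp
qed

lemma rank_cl: "A \<subseteq> gnd M \<Longrightarrow> rank M (cl M A) = rank M A"
  using rank_Un_cl[of "cl M A" A] subset_cl[of A] by (simp add: Un_absorb2)

lemma rank_insert_notin_cl:
  assumes "x \<in> gnd M - cl M A" shows "rank M (insert x A) = Suc (rank M A)"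
  using assms rank_mono[of A "insert x A"] rank_insert_le[of x A] unfolding cl_def by fastforce

lemma exists_notin_cl_if_rank_less:
  assumes "rank M A < rank M W"
  obtains x where "x \<in> W" "x \<notin> cl M A"
proof -
  have "\<not> W \<subseteq> cl M A"
    using assms rank_Un_cl[of W A] rank_mono[of W "W \<union> A"] by auto
  then show ?thesis
    using that by blast
qed

lemma insert_indep_iff:
  assumes "I \<in> indep M" "x \<in> gnd M - I"
  shows "insert x I \<in> indep M \<longleftrightarrow> x \<notin> cl M I"
proof -
  have "finite I"
    using finite_indep assms(1) .
  then have "card (insert x I) = Suc (rank M I)"
    using assms by (simp add: rank_indep)
  moreover have "rank M I \<le> rank M (insert x I)" "rank M (insert x I) \<le> Suc (rank M I)"
    by (auto intro: rank_mono rank_insert_le)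
  ultimately show ?thesis
    using indep_iff_card_le_rank[of "insert x I"] \<open>finite I\<close> assms(2) unfolding cl_def by auto
qed

lemma flat_cl: assumes "A \<subseteq> gnd M" shows "flat M (cl M A)"
  unfolding flat_def
proof (intro conjI ballI)
  show "cl M A \<subseteq> gnd M"
    unfolding cl_def by blast
  fix x assume x: "x \<in> gnd M - cl M A"
  then have "rank M A < rank M (insert x A)"
    using rank_mono[of A "insert x A"] unfolding cl_def by fastforce
  also have "\<dots> \<le> rank M (insert x (cl M A))"
    using subset_cl[OF assms] by (intro rank_mono) blast
  finally show "rank M (cl M A) < rank M (insert x (cl M A))"
    using rank_cl[OF assms] by simp
qed

lemma exists_circuit:
  assumes "A \<subseteq> gnd M" "A \<notin> indep M"
  obtains C where "C \<subseteq> A" "circuit M C"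
proof -
  obtain C where C: "C \<subseteq> A" "C \<notin> indep M"
    and minimal: "\<And>D. D \<subseteq> A \<Longrightarrow> D \<notin> indep M \<Longrightarrow> D \<subseteq> C \<Longrightarrow> C = D"
    using finite_has_minimal2[of "{D. D \<subseteq> A \<and> D \<notin> indep M}" A] assms finite_subset_gnd
    by auto
  then have "circuit M C"
    unfolding circuit_def using assms(1) by blast
  then show ?thesis
    using that C(1) by blast
qed

lemma circuit_in_insert:
  assumes "I \<in> indep M" "insert x I \<subseteq> gnd M" "insert x I \<notin> indep M"
  obtains C where "circuit M C" "x \<in> C" "C \<subseteq> insert x I"
proof -
  obtain C where C: "C \<subseteq> insert x I" "circuit M C"
    using exists_circuit assms(2,3) .
  moreover have "x \<in> C"
    using C indep_subset[OF assms(1), of C] unfolding circuit_def by blast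
  ultimately show ?thesis
    using that by blast
qed

lemma circuit_mem_cl_Diff:
  assumes "circuit M C" "y \<in> C" "C \<subseteq> Z"
  shows "y \<in> cl M (Z - {y})"
proof -
  have "C - {y} \<in> indep M" "insert y (C - {y}) \<notin> indep M" "y \<in> gnd M"
    using assms unfolding circuit_def by (auto simp: insert_absorb)
  then have "y \<in> cl M (C - {y})"
    using insert_indep_iff by blast
  then show ?thesis
    using cl_mono[of "C - {y}" "Z - {y}"] assms(3) by blast
qed

lemma circuit_nonempty: "circuit M C \<Longrightarrow> C \<noteq> {}"
  unfolding circuit_def using indep_empty by blast

lemma circuit_rank_lt_card: "circuit M C \<Longrightarrow> rank M C < card C"
  unfolding circuit_def using indep_iff_card_le_rank finite_subset_gnd by fastforce

lemma cyclic_flat_cl_circuit: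
  assumes "circuit M C"
  shows "cyclic_flat M (cl M C)"
proof -
  have C: "C \<subseteq> gnd M" "C \<subseteq> cl M C"
    using assms subset_cl unfolding circuit_def by auto
  have "x \<in> \<Union>{D. circuit M D \<and> D \<subseteq> cl M C}" if x: "x \<in> cl M C" for x
  proof (cases "x \<in> C")
    case True
    then show ?thesis
      using assms C(2) by blast
  next
    case False
    \<comment> \<open>\<open>x\<close> is spanned by the independent set \<open>C - {c}\<close>, so its fundamental circuit lies in \<open>cl M C\<close>.\<close>
    obtain c where "c \<in> C"
      using circuit_nonempty[OF assms] by blast
    define I where "I = C - {c}"
    have I: "I \<in> indep M" "insert c I = C"
      using assms \<open>c \<in> C\<close> unfolding circuit_def I_def by auto
    have "rank M (insert x I) \<le> rank M (insert x C)"
      using I(2) by (intro rank_mono) blast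
    also have "\<dots> = rank M C"
      using x unfolding cl_def by simp
    also have "\<dots> = rank M I"
      using rank_Un_cl[of "{c}" I] circuit_mem_cl_Diff[OF assms \<open>c \<in> C\<close>] I(2)
      unfolding I_def by simp
    finally have "x \<in> cl M I"
      using x rank_mono[of I "insert x I"] unfolding cl_def by fastforce
    moreover have "x \<in> gnd M - I"
      using x False I(2) unfolding cl_def by blast
    ultimately have dependent: "insert x I \<notin> indep M"
      using insert_indep_iff[OF I(1)] by blast
    have "insert x I \<subseteq> gnd M"
      using \<open>x \<in> gnd M - I\<close> C(1) I(2) by blast
    then obtain D where "circuit M D" "x \<in> D" "D \<subseteq> insert x I"
      using circuit_in_insert[OF I(1)] dependent by blast
    moreover have "insert x I \<subseteq> cl M C"
      using x C(2) I(2) by blast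
    ultimately show ?thesis
      by blast
  qed
  then show ?thesis
    unfolding cyclic_flat_def using flat_cl[OF C(1)] by blast
qed

lemma uniform_if_trivial_cyclic_flats:
  assumes "\<And>Z. cyclic_flat M Z \<Longrightarrow> Z = {} \<or> Z = gnd M"
  shows "uniform_matroid M"
proof -
  have "A \<in> indep M \<longleftrightarrow> A \<subseteq> gnd M \<and> card A \<le> rank M (gnd M)" for A
  proof
    assume "A \<in> indep M"
    then show "A \<subseteq> gnd M \<and> card A \<le> rank M (gnd M)"
      using indep_subset_gnd card_le_rank by blast
  next
    assume A: "A \<subseteq> gnd M \<and> card A \<le> rank M (gnd M)"
    show "A \<in> indep M"
    proof (rule ccontr)
      assume "A \<notin> indep M"
      then obtain C where C: "C \<subseteq> A" "circuit M C"
        using exists_circuit A by blast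
      then have "C \<subseteq> gnd M"
        using A by blast
      then have "cl M C = gnd M"
        using assms[OF cyclic_flat_cl_circuit[OF C(2)]] subset_cl circuit_nonempty[OF C(2)]
        by blast
      then have "rank M (gnd M) = rank M C"
        using rank_cl[OF \<open>C \<subseteq> gnd M\<close>] by simp
      also have "\<dots> < card C"
        using circuit_rank_lt_card[OF C(2)] .
      also have "\<dots> \<le> card A"
        using C(1) A finite_subset_gnd by (intro card_mono) auto
      finally show False
        using A by simp
    qed
  qed
  then show ?thesis
    unfolding uniform_matroid_def by blast
qed

end

section \<open>The lattice of cyclic flats\<close>

lemma cyclic_flat_subset_gnd: "cyclic_flat M Z \<Longrightarrow> Z \<subseteq> gnd M"
  unfolding cyclic_flat_def flat_def by blast

lemma cf_lattice_subsetI: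
  assumes "L \<subseteq> Pow (gnd M)" "\<And>Z. cyclic_flat M Z \<Longrightarrow> Z \<in> L"
    and "\<And>X. X \<subseteq> L \<Longrightarrow> \<Union>X \<in> L" "\<And>X. X \<subseteq> L \<Longrightarrow> gnd M \<inter> \<Inter>X \<in> L"
  shows "cf_lattice M \<subseteq> L"
  unfolding cf_lattice_def by (rule Inter_lower) (use assms in blast)

lemma cf_lattice_subset_Pow: "cf_lattice M \<subseteq> Pow (gnd M)"
  by (rule cf_lattice_subsetI) (auto dest: cyclic_flat_subset_gnd)

lemma cyclic_flat_in_cf_lattice: "cyclic_flat M Z \<Longrightarrow> Z \<in> cf_lattice M"
  unfolding cf_lattice_def by blast

lemma Union_in_cf_lattice:
  assumes "X \<subseteq> cf_lattice M" shows "\<Union>X \<in> cf_lattice M"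
  unfolding cf_lattice_def
proof (intro InterI, elim CollectE conjE)
  fix L assume L: "L \<subseteq> Pow (gnd M)" "{F. cyclic_flat M F} \<subseteq> L"
    "\<forall>X \<subseteq> L. \<Union>X \<in> L" "\<forall>X \<subseteq> L. gnd M \<inter> \<Inter>X \<in> L"
  then have "X \<subseteq> L"
    by (intro order_trans[OF assms cf_lattice_subsetI]) auto
  then show "\<Union>X \<in> L"
    using L(3) by blast
qed

lemma Inter_in_cf_lattice:
  assumes "X \<subseteq> cf_lattice M" shows "gnd M \<inter> \<Inter>X \<in> cf_lattice M"
  unfolding cf_lattice_def
proof (intro InterI, elim CollectE conjE)
  fix L assume L: "L \<subseteq> Pow (gnd M)" "{F. cyclic_flat M F} \<subseteq> L"
    "\<forall>X \<subseteq> L. \<Union>X \<in> L" "\<forall>X \<subseteq> L. gnd M \<inter> \<Inter>X \<in> L"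
  then have "X \<subseteq> L"
    by (intro order_trans[OF assms cf_lattice_subsetI]) auto
  then show "gnd M \<inter> \<Inter>X \<in> L"
    using L(4) by blast
qed

lemma empty_in_cf_lattice: "{} \<in> cf_lattice M"
  using Union_in_cf_lattice[of "{}"] by simp

lemma gnd_in_cf_lattice: "gnd M \<in> cf_lattice M"
  using Inter_in_cf_lattice[of "{}"] by simp

lemma cf_lattice_dichotomy:
  assumes "V \<subseteq> gnd M" "\<And>Z. cyclic_flat M Z \<Longrightarrow> Z \<subseteq> U \<or> V \<subseteq> Z"
    and "Y \<in> cf_lattice M"
  shows "Y \<subseteq> U \<or> V \<subseteq> Y"
proof -
  have "cf_lattice M \<subseteq> {Y. Y \<subseteq> gnd M \<and> (Y \<subseteq> U \<or> V \<subseteq> Y)}"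
  proof (rule cf_lattice_subsetI)
    fix X assume "X \<subseteq> {Y. Y \<subseteq> gnd M \<and> (Y \<subseteq> U \<or> V \<subseteq> Y)}"
    then show "\<Union>X \<in> {Y. Y \<subseteq> gnd M \<and> (Y \<subseteq> U \<or> V \<subseteq> Y)}"
      "gnd M \<inter> \<Inter>X \<in> {Y. Y \<subseteq> gnd M \<and> (Y \<subseteq> U \<or> V \<subseteq> Y)}"
      using assms(1) by blast+
  qed (use assms(2) cyclic_flat_subset_gnd in blast)+
  then show ?thesis
    using assms(3) by blast
qed

definition splitting_set :: "'a matroid \<Rightarrow> 'a set \<Rightarrow> bool" where
  "splitting_set M X \<longleftrightarrow> X \<subseteq> gnd M \<and> X \<noteq> {} \<and> X \<noteq> gnd M
     \<and> (\<forall>Z. cyclic_flat M Z \<longrightarrow> Z \<subseteq> X \<or> X \<subseteq> Z)"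

lemma splitting_set_if_nontrivial_pinchpoint:
  assumes "pinchpoint (cf_lattice M) X" "nontrivial_elem (cf_lattice M) X"
  shows "splitting_set M X"
proof -
  obtain Y Y' where "Y \<subset> X" "Y' \<in> cf_lattice M" "X \<subset> Y'"
    using assms(2) unfolding nontrivial_elem_def by blast
  moreover have "X \<in> cf_lattice M"
    using assms(1) unfolding pinchpoint_def by blast
  ultimately have "X \<subseteq> gnd M" "X \<noteq> {}" "X \<noteq> gnd M"
    using cf_lattice_subset_Pow by blast+
  moreover have "\<forall>Z. cyclic_flat M Z \<longrightarrow> Z \<subseteq> X \<or> X \<subseteq> Z"
    using assms(1) cyclic_flat_in_cf_lattice unfolding pinchpoint_def by blast
  ultimately show ?thesis
    unfolding splitting_set_def by blast
qed

lemma (in matroid) nontrivial_pinchpoint_if_splitting_set: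
  assumes "splitting_set M X" "\<not> uniform_matroid M"
  obtains Y where "pinchpoint (cf_lattice M) Y" "nontrivial_elem (cf_lattice M) Y"
proof -
  define U where "U = \<Union>{Z. cyclic_flat M Z \<and> Z \<subseteq> X}"
  define V where "V = gnd M \<inter> \<Inter>{Z. cyclic_flat M Z \<and> X \<subseteq> Z}"
  have X: "X \<subseteq> gnd M" "X \<noteq> {}" "X \<noteq> gnd M" "\<And>Z. cyclic_flat M Z \<Longrightarrow> Z \<subseteq> X \<or> X \<subseteq> Z"
    using assms(1) unfolding splitting_set_def by blast+
  have in_lattice: "U \<in> cf_lattice M" "V \<in> cf_lattice M"
    unfolding U_def V_def using cyclic_flat_in_cf_lattice
    by (blast intro: Union_in_cf_lattice Inter_in_cf_lattice)+
  have UV: "U \<subseteq> X" "X \<subseteq> V" "V \<subseteq> gnd M"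
    unfolding U_def V_def using X(1) by blast+
  have cyclic_flats: "Z \<subseteq> U \<or> V \<subseteq> Z" if "cyclic_flat M Z" for Z
    using X(4)[OF that] that unfolding U_def V_def by blast
  have dichotomy: "Y \<subseteq> U \<or> V \<subseteq> Y" if "Y \<in> cf_lattice M" for Y
    using cf_lattice_dichotomy[OF UV(3) cyclic_flats that] by blast
  have "pinchpoint (cf_lattice M) U" "pinchpoint (cf_lattice M) V"
    unfolding pinchpoint_def using in_lattice dichotomy UV(1,2) by (meson order_trans)+
  moreover have "U \<noteq> {} \<or> V \<noteq> gnd M"
  proof (rule ccontr)
    assume "\<not> (U \<noteq> {} \<or> V \<noteq> gnd M)"
    then have "Z = {} \<or> Z = gnd M" if "cyclic_flat M Z" for Z
      using cyclic_flats[OF that] cyclic_flat_subset_gnd[OF that] by blast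
    then show False
      using uniform_if_trivial_cyclic_flats assms(2) by blast
  qed
  moreover have "U \<subset> gnd M" "{} \<subset> V"
    using UV X(1,2,3) by blast+
  ultimately show ?thesis
    using that in_lattice empty_in_cf_lattice gnd_in_cf_lattice UV(3)
    unfolding nontrivial_elem_def by blast
qed

section \<open>Free products\<close>

lemma gnd_free_product: "gnd (free_product A B) = gnd A \<union> gnd B"
  by (simp add: free_product_def gnd_def)

lemma matroid_eqI: "gnd P = gnd Q \<Longrightarrow> indep P = indep Q \<Longrightarrow> P = Q"
  by (simp add: gnd_def indep_def prod_eq_iff)

locale free_product_pair = A: matroid A + B: matroid B for A B :: "'a matroid" +
  assumes disjoint_gnd: "gnd A \<inter> gnd B = {}"
begin

lemma card_split: "I \<subseteq> gnd A \<union> gnd B \<Longrightarrow> card I = card (I \<inter> gnd A) + card (I \<inter> gnd B)"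
  using card_Un_disjoint[of "I \<inter> gnd A" "I \<inter> gnd B"] A.finite_gnd B.finite_gnd disjoint_gnd
  by (simp add: Int_Un_distrib[symmetric] Int_absorb2 inf_assoc inf_left_commute)

lemma indep_free_product_iff:
  "I \<in> indep (free_product A B) \<longleftrightarrow> I \<subseteq> gnd A \<union> gnd B \<and> I \<inter> gnd A \<in> indep A
     \<and> card I \<le> rank A (gnd A) + rank B (I \<inter> gnd B)"
proof (cases "I \<subseteq> gnd A \<union> gnd B \<and> I \<inter> gnd A \<in> indep A")
  case True
  then have "finite (I \<inter> gnd B)"
    using B.finite_subset_gnd by blast
  then have "rank B (I \<inter> gnd B) \<le> card (I \<inter> gnd B)"
    using B.rank_le_card by blast
  moreover have "card (I \<inter> gnd A) \<le> rank A (gnd A)"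
    using True A.card_le_rank by blast
  ultimately show ?thesis
    using True card_split[of I] A.rank_indep[of "I \<inter> gnd A"]
    unfolding free_product_def indep_def[symmetric] corank_def nullity_def
    by (auto simp: indep_def)
qed (auto simp: free_product_def indep_def)

lemma finite_free_product_indep: "I \<in> indep (free_product A B) \<Longrightarrow> finite I"
  unfolding indep_free_product_iff using A.finite_gnd B.finite_gnd finite_subset by blast

lemma indep_free_product_subset:
  assumes I: "I \<in> indep (free_product A B)" and "J \<subseteq> I"
  shows "J \<in> indep (free_product A B)"
proof -
  have "finite I"
    using finite_free_product_indep I .
  have "(I \<inter> gnd B - J) \<union> (J \<inter> gnd B) = I \<inter> gnd B"
    using \<open>J \<subseteq> I\<close> by blast
  moreover have "card (I \<inter> gnd B - J) \<le> card (I - J)"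
    by (rule card_mono) (use \<open>finite I\<close> in auto)
  ultimately have "rank B (I \<inter> gnd B) \<le> rank B (J \<inter> gnd B) + card (I - J)"
    using B.rank_Un_le[of "I \<inter> gnd B - J" "J \<inter> gnd B"] \<open>finite I\<close> by simp
  moreover have "card I = card J + card (I - J)"
    using card_Un_disjoint[of J "I - J"] \<open>finite I\<close> finite_subset[OF \<open>J \<subseteq> I\<close>]
    by (simp add: Un_absorb1[OF \<open>J \<subseteq> I\<close>])
  ultimately have "card J \<le> rank A (gnd A) + rank B (J \<inter> gnd B)"
    using I unfolding indep_free_product_iff by linarith
  moreover have "J \<inter> gnd A \<in> indep A"
    using A.indep_subset[of "I \<inter> gnd A" "J \<inter> gnd A"] I \<open>J \<subseteq> I\<close>
    unfolding indep_free_product_iff by blast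
  ultimately show ?thesis
    using I \<open>J \<subseteq> I\<close> unfolding indep_free_product_iff by blast
qed

lemma insert_indep_free_product_gnd_A:
  assumes "I \<in> indep (free_product A B)" "x \<in> gnd A - I"
    and "insert x (I \<inter> gnd A) \<in> indep A" "Suc (card I) \<le> rank A (gnd A) + rank B (I \<inter> gnd B)"
  shows "insert x I \<in> indep (free_product A B)"
proof -
  have "insert x I \<inter> gnd A = insert x (I \<inter> gnd A)" "insert x I \<inter> gnd B = I \<inter> gnd B"
    using assms(2) disjoint_gnd by auto
  moreover have "card (insert x I) = Suc (card I)"
    using assms(1,2) finite_free_product_indep by simp
  ultimately show ?thesis
    using assms unfolding indep_free_product_iff by auto
qed

lemma insert_indep_free_product_gnd_B:
  assumes "I \<in> indep (free_product A B)" "x \<in> gnd B - I"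
    and "Suc (card I) \<le> rank A (gnd A) + rank B (insert x (I \<inter> gnd B))"
  shows "insert x I \<in> indep (free_product A B)"
proof -
  have "insert x I \<inter> gnd A = I \<inter> gnd A" "insert x I \<inter> gnd B = insert x (I \<inter> gnd B)"
    using assms(2) disjoint_gnd by auto
  moreover have "card (insert x I) = Suc (card I)"
    using assms(1,2) finite_free_product_indep by simp
  ultimately show ?thesis
    using assms unfolding indep_free_product_iff by auto
qed

lemma indep_free_product_augment:
  assumes P: "P \<in> indep (free_product A B)" and Q: "Q \<in> indep (free_product A B)"
    and "card P < card Q"
  shows "\<exists>x \<in> Q - P. insert x P \<in> indep (free_product A B)"
proof -
  let ?r = "rank A (gnd A)"
  have P': "P \<subseteq> gnd A \<union> gnd B" "P \<inter> gnd A \<in> indep A" "card P \<le> ?r + rank B (P \<inter> gnd B)"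
    using P unfolding indep_free_product_iff by blast+
  have Q': "Q \<subseteq> gnd A \<union> gnd B" "Q \<inter> gnd A \<in> indep A" "card Q \<le> ?r + rank B (Q \<inter> gnd B)"
    using Q unfolding indep_free_product_iff by blast+
  consider (slack) "card P < ?r + rank B (P \<inter> gnd B)" | (tight) "card P = ?r + rank B (P \<inter> gnd B)"
    using P'(3) by linarith
  then show ?thesis
  proof cases
    case slack
    show ?thesis
    proof (cases "Q \<inter> gnd B \<subseteq> P")
      case True
      then have "card (Q \<inter> gnd B) \<le> card (P \<inter> gnd B)"
        using finite_free_product_indep[OF P] by (intro card_mono) auto
      then have "card (P \<inter> gnd A) < card (Q \<inter> gnd A)"
        using card_split[OF P'(1)] card_split[OF Q'(1)] \<open>card P < card Q\<close> by linarith
      then obtain x where "x \<in> Q \<inter> gnd A - P \<inter> gnd A" "insert x (P \<inter> gnd A) \<in> indep A"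
        using A.indep_augment[OF P'(2) Q'(2)] by blast
      then show ?thesis
        using insert_indep_free_product_gnd_A[OF P] slack by auto
    next
      case False
      then obtain x where x: "x \<in> Q \<inter> gnd B - P"
        by blast
      then have "rank B (P \<inter> gnd B) \<le> rank B (insert x (P \<inter> gnd B))"
        by (intro B.rank_mono) blast
      then show ?thesis
        using insert_indep_free_product_gnd_B[OF P, of x] x slack by auto
    qed
  next
    case tight
    have "rank B (P \<inter> gnd B) < rank B (Q \<inter> gnd B)"
      using Q'(3) tight \<open>card P < card Q\<close> by linarith
    then obtain x where x: "x \<in> Q \<inter> gnd B" "x \<notin> cl B (P \<inter> gnd B)"
      by (rule B.exists_notin_cl_if_rank_less)
    then have "x \<notin> P"
      using B.subset_cl[of "P \<inter> gnd B"] by blast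
    then show ?thesis
      using insert_indep_free_product_gnd_B[OF P, of x] B.rank_insert_notin_cl[of x "P \<inter> gnd B"]
        x tight by auto
  qed
qed

lemma matroid_free_product: "is_matroid (free_product A B)"
  unfolding is_matroid_def
proof (intro conjI allI impI ballI)
  show "finite (gnd (free_product A B))"
    using A.finite_gnd B.finite_gnd by (simp add: gnd_free_product)
  show "{} \<in> indep (free_product A B)"
    using A.indep_empty unfolding indep_free_product_iff by simp
  show "I \<subseteq> gnd (free_product A B)" if "I \<in> indep (free_product A B)" for I
    using that unfolding indep_free_product_iff gnd_free_product by blast
qed (use indep_free_product_subset indep_free_product_augment in blast)+

sublocale F: matroid "free_product A B"
  by (rule matroid.intro) (rule matroid_free_product)

lemma cyclic_flat_free_product_comparable:
  assumes Z: "cyclic_flat (free_product A B) Z"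
  shows "Z \<subseteq> gnd A \<or> gnd A \<subseteq> Z"
proof (rule ccontr)
  let ?F = "free_product A B"
  assume "\<not> (Z \<subseteq> gnd A \<or> gnd A \<subseteq> Z)"
  then obtain x y where y: "y \<in> Z" "y \<notin> gnd A" and x: "x \<in> gnd A" "x \<notin> Z"
    by blast
  have "Z \<subseteq> gnd A \<union> gnd B"
    using cyclic_flat_subset_gnd[OF Z] by (simp add: gnd_free_product)
  then have "y \<in> gnd B"
    using y by blast
  obtain C where "circuit ?F C" "y \<in> C" "C \<subseteq> Z"
    using Z y(1) unfolding cyclic_flat_def by blast
  then have y_cl: "y \<in> cl ?F (Z - {y})"
    by (rule F.circuit_mem_cl_Diff)
  then have rank_Z: "rank ?F Z = rank ?F (Z - {y})"
    using F.rank_Un_cl[of "{y}" "Z - {y}"] y(1) by (simp add: insert_absorb)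
  have x_not_cl: "x \<notin> cl ?F (Z - {y})"
  proof
    assume "x \<in> cl ?F (Z - {y})"
    then have "rank ?F ({x, y} \<union> (Z - {y})) = rank ?F Z"
      using F.rank_Un_cl[of "{x, y}" "Z - {y}"] y_cl rank_Z by simp
    moreover have "{x, y} \<union> (Z - {y}) = insert x Z"
      using y(1) by blast
    moreover have "rank ?F Z < rank ?F (insert x Z)"
      using Z x unfolding cyclic_flat_def flat_def gnd_free_product by blast
    ultimately show False
      by simp
  qed
  obtain I where I: "I \<subseteq> Z - {y}" "I \<in> indep ?F" "card I = rank ?F (Z - {y})"
    using F.exists_basis .
  have "x \<notin> I" "y \<notin> I" "finite I"
    using x(2) I(1) F.finite_indep[OF I(2)] by blast+
  \<comment> \<open>In the free product, adding \<open>x \<in> gnd A\<close> to \<open>I\<close> costs the same slack as adding \<open>y \<in> gnd B\<close>.\<close>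
  have "x \<notin> cl ?F I"
    using x_not_cl F.cl_mono[OF I(1)] by blast
  then have "insert x I \<in> indep ?F"
    using F.insert_indep_iff[OF I(2), of x] x(1) \<open>x \<notin> I\<close> by (simp add: gnd_free_product)
  moreover have "insert x I \<inter> gnd B = I \<inter> gnd B"
    using x(1) disjoint_gnd by blast
  ultimately have "Suc (card I) \<le> rank A (gnd A) + rank B (I \<inter> gnd B)"
    using \<open>x \<notin> I\<close> \<open>finite I\<close> unfolding indep_free_product_iff by simp
  moreover have "rank B (I \<inter> gnd B) \<le> rank B (insert y (I \<inter> gnd B))"
    by (rule B.rank_mono) blast
  ultimately have "insert y I \<in> indep ?F"
    using insert_indep_free_product_gnd_B[OF I(2), of y] \<open>y \<in> gnd B\<close> \<open>y \<notin> I\<close> by simp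
  then have "card (insert y I) \<le> rank ?F Z"
    using I(1) y(1) by (intro F.card_le_rank) auto
  then show False
    using I(3) rank_Z \<open>y \<notin> I\<close> \<open>finite I\<close> by simp
qed

end

lemma matroid_empty_matroid: "is_matroid (empty_matroid :: 'a matroid)"
  and gnd_empty_matroid: "gnd (empty_matroid :: 'a matroid) = {}"
  unfolding is_matroid_def empty_matroid_def gnd_def indep_def by auto

lemma free_product_empty_left:
  assumes "is_matroid E" "gnd E = {}" "is_matroid N"
  shows "free_product E N = N"
proof -
  interpret free_product_pair E N
    by unfold_locales (simp_all add: assms)
  have "rank E (gnd E) = 0"
    using A.rank_indep[OF A.indep_empty] assms(2) by simp
  then have "I \<in> indep (free_product E N) \<longleftrightarrow> I \<subseteq> gnd N \<and> card I \<le> rank N I" for I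
    unfolding indep_free_product_iff using assms(2) A.indep_empty by (auto simp: Int_absorb2)
  also have "I \<subseteq> gnd N \<and> card I \<le> rank N I \<longleftrightarrow> I \<in> indep N" for I
    using B.indep_iff_card_le_rank[OF B.finite_subset_gnd] B.indep_subset_gnd by blast
  finally have "indep (free_product E N) = indep N"
    by blast
  then show ?thesis
    by (intro matroid_eqI) (simp_all add: gnd_free_product assms(2))
qed

lemma free_product_empty_right:
  assumes "is_matroid E" "gnd E = {}" "is_matroid N"
  shows "free_product N E = N"
proof -
  interpret free_product_pair N E
    by unfold_locales (simp_all add: assms)
  have "rank E {} = 0"
    using B.rank_indep[OF B.indep_empty] by simp
  then have "I \<in> indep (free_product N E) \<longleftrightarrow> I \<subseteq> gnd N \<and> I \<in> indep N" for I
    unfolding indep_free_product_iff using assms(2) A.card_le_rank[of I "gnd N"]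
    by (auto simp: Int_absorb2)
  moreover have "I \<in> indep N \<Longrightarrow> I \<subseteq> gnd N" for I
    by (rule A.indep_subset_gnd)
  ultimately have "indep (free_product N E) = indep N"
    by blast
  then show ?thesis
    by (intro matroid_eqI) (simp_all add: gnd_free_product assms(2))
qed

definition disjoint_gnds :: "'a matroid list \<Rightarrow> bool" where
  "disjoint_gnds Ns \<longleftrightarrow>
     (\<forall>i < length Ns. \<forall>j < length Ns. i \<noteq> j \<longrightarrow> gnd (Ns ! i) \<inter> gnd (Ns ! j) = {})"

lemma disjoint_gnds_ConsD:
  assumes "disjoint_gnds (N # Ns)"
  shows "disjoint_gnds Ns" "gnd N \<inter> \<Union>(gnd ` set Ns) = {}"
proof -
  show "disjoint_gnds Ns"
    unfolding disjoint_gnds_def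
  proof (intro allI impI)
    fix i j assume "i < length Ns" "j < length Ns" "i \<noteq> j"
    then show "gnd (Ns ! i) \<inter> gnd (Ns ! j) = {}"
      using assms unfolding disjoint_gnds_def
      by (metis Suc_inject Suc_less_eq length_Cons nth_Cons_Suc)
  qed
  have "gnd N \<inter> gnd (Ns ! j) = {}" if "j < length Ns" for j
    using assms that unfolding disjoint_gnds_def
    by (metis Suc_less_eq length_Cons nat.distinct(1) nth_Cons_0 nth_Cons_Suc zero_less_Suc)
  then show "gnd N \<inter> \<Union>(gnd ` set Ns) = {}"
    by (fastforce simp: in_set_conv_nth)
qed

lemma matroid_free_product_list:
  assumes "\<forall>N \<in> set Ns. is_matroid N" "disjoint_gnds Ns"
  shows "is_matroid (free_product_list Ns) \<and> gnd (free_product_list Ns) = \<Union>(gnd ` set Ns)"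
  using assms
proof (induction Ns)
  case Nil
  then show ?case
    by (simp add: free_product_list_def matroid_empty_matroid gnd_empty_matroid)
next
  case (Cons N Ns)
  then have "free_product_pair N (free_product_list Ns)"
    using disjoint_gnds_ConsD[OF Cons.prems(2)] by unfold_locales simp_all
  then show ?case
    using Cons disjoint_gnds_ConsD[OF Cons.prems(2)]
    by (simp add: free_product_list_def free_product_pair.matroid_free_product gnd_free_product)
qed

lemma free_product_list_split:
  assumes "\<forall>N \<in> set Ns. is_matroid N" "disjoint_gnds Ns" "free_product_list Ns = M"
    and "M \<notin> set Ns" "gnd M \<noteq> {}"
  shows "\<exists>A B. free_product_pair A B \<and> gnd A \<noteq> {} \<and> gnd B \<noteq> {} \<and> M = free_product A B"
  using assms
proof (induction Ns)
  case Nil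
  then show ?case
    by (simp add: free_product_list_def gnd_empty_matroid)
next
  case (Cons N Ns)
  let ?R = "free_product_list Ns"
  have R: "is_matroid ?R" "gnd ?R = \<Union>(gnd ` set Ns)"
    using matroid_free_product_list[of Ns] Cons.prems(1) disjoint_gnds_ConsD(1)[OF Cons.prems(2)]
    by simp_all
  have N: "is_matroid N"
    using Cons.prems(1) by simp
  have M: "M = free_product N ?R"
    using Cons.prems(3) by (simp add: free_product_list_def)
  consider "gnd N = {}" | "gnd ?R = {}" | "gnd N \<noteq> {}" "gnd ?R \<noteq> {}"
    by blast
  then show ?case
  proof cases
    case 1
    then have "M = ?R"
      using M free_product_empty_left[OF N _ R(1)] by simp
    then show ?thesis
      using Cons.IH Cons.prems disjoint_gnds_ConsD(1)[OF Cons.prems(2)] by simp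
  next
    case 2
    then have "M = N"
      using M free_product_empty_right[OF R(1) _ N] by simp
    then show ?thesis
      using Cons.prems(4) by simp
  next
    case 3
    have "free_product_pair N ?R"
      using N R disjoint_gnds_ConsD(2)[OF Cons.prems(2)] by unfold_locales simp_all
    then show ?thesis
      using 3 M by blast
  qed
qed

section \<open>Restriction, contraction and irreducibility\<close>

definition restrict :: "'a matroid \<Rightarrow> 'a set \<Rightarrow> 'a matroid" where
  "restrict M X = (X, {I \<in> indep M. I \<subseteq> X})"

text \<open>The contraction \<open>M/X\<close>, defined through the rank so that no basis of \<open>X\<close> has to be chosen.\<close>

definition contract :: "'a matroid \<Rightarrow> 'a set \<Rightarrow> 'a matroid" where
  "contract M X = (gnd M - X, {Y. Y \<subseteq> gnd M - X \<and> rank M (Y \<union> X) = card Y + rank M X})"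

lemma gnd_restrict: "gnd (restrict M X) = X"
  and indep_restrict: "indep (restrict M X) = {I \<in> indep M. I \<subseteq> X}"
  by (simp_all add: restrict_def gnd_def indep_def)

lemma gnd_contract: "gnd (contract M X) = gnd M - X"
  and indep_contract:
    "indep (contract M X) = {Y. Y \<subseteq> gnd M - X \<and> rank M (Y \<union> X) = card Y + rank M X}"
  by (simp_all add: contract_def gnd_def indep_def)

context matroid
begin

lemma matroid_restrict:
  assumes "X \<subseteq> gnd M" shows "is_matroid (restrict M X)"
  unfolding is_matroid_def gnd_restrict indep_restrict
proof (intro conjI allI impI ballI)
  fix I J assume IJ: "I \<in> {I \<in> indep M. I \<subseteq> X} \<and> J \<in> {I \<in> indep M. I \<subseteq> X} \<and> card I < card J"
  then obtain x where "x \<in> J - I" "insert x I \<in> indep M"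
    using indep_augment by blast
  then show "\<exists>x\<in>J - I. insert x I \<in> {I \<in> indep M. I \<subseteq> X}"
    using IJ by blast
qed (use assms finite_subset_gnd indep_empty indep_subset in auto)

lemma rank_restrict:
  assumes "Y \<subseteq> X" shows "rank (restrict M X) Y = rank M Y"
proof -
  have "{B. B \<subseteq> Y \<and> B \<in> indep (restrict M X)} = {B. B \<subseteq> Y \<and> B \<in> indep M}"
    using assms unfolding indep_restrict by blast
  then show ?thesis
    unfolding rank_def by simp
qed

lemma subset_cl_basis:
  assumes "B \<subseteq> X" "X \<subseteq> gnd M" "rank M B = rank M X"
  shows "X \<subseteq> cl M B"
proof
  fix x assume "x \<in> X"
  then have "rank M (insert x B) \<le> rank M X" "rank M B \<le> rank M (insert x B)"
    using assms(1) by (auto intro: rank_mono)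
  then show "x \<in> cl M B"
    using \<open>x \<in> X\<close> assms unfolding cl_def by auto
qed

lemma rank_Un_basis:
  assumes "B \<subseteq> X" "X \<subseteq> gnd M" "rank M B = rank M X"
  shows "rank M (Y \<union> X) = rank M (Y \<union> B)"
proof -
  have "X \<subseteq> cl M (Y \<union> B)"
    using subset_cl_basis[OF assms] cl_mono[of B "Y \<union> B"] by blast
  then have "rank M (X \<union> (Y \<union> B)) = rank M (Y \<union> B)"
    by (rule rank_Un_cl)
  moreover have "X \<union> (Y \<union> B) = Y \<union> X"
    using assms(1) by blast
  ultimately show ?thesis
    by simp
qed

lemma indep_contract_iff:
  assumes "X \<subseteq> gnd M" "B \<subseteq> X" "B \<in> indep M" "card B = rank M X"
  shows "Y \<in> indep (contract M X) \<longleftrightarrow> Y \<subseteq> gnd M - X \<and> Y \<union> B \<in> indep M"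
proof (cases "Y \<subseteq> gnd M - X")
  case True
  have "finite (Y \<union> B)"
    using True assms(1,2) finite_subset_gnd by blast
  moreover have "card (Y \<union> B) = card Y + rank M X"
    using True assms(2,4) \<open>finite (Y \<union> B)\<close> by (subst card_Un_disjoint) auto
  moreover have "rank M (Y \<union> X) = rank M (Y \<union> B)"
    using rank_Un_basis assms rank_indep by simp
  ultimately show ?thesis
    using True indep_iff_card_le_rank[of "Y \<union> B"] rank_le_card[of "Y \<union> B"]
    unfolding indep_contract by auto
qed (simp add: indep_contract)

lemma matroid_contract:
  assumes "X \<subseteq> gnd M" shows "is_matroid (contract M X)"
proof -
  obtain B where B: "B \<subseteq> X" "B \<in> indep M" "card B = rank M X"
    using exists_basis .
  note indep_iff = indep_contract_iff[OF assms B]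
  show ?thesis
    unfolding is_matroid_def
  proof (intro conjI allI impI ballI)
    show "finite (gnd (contract M X))"
      using finite_gnd by (simp add: gnd_contract)
    show "{} \<in> indep (contract M X)"
      using indep_iff B(2) by simp
    show "I \<subseteq> gnd (contract M X)" if "I \<in> indep (contract M X)" for I
      using that indep_iff by (simp add: gnd_contract)
  next
    fix I J assume "I \<in> indep (contract M X) \<and> J \<subseteq> I"
    then show "J \<in> indep (contract M X)"
      using indep_iff indep_subset[of "I \<union> B" "J \<union> B"] by blast
  next
    fix I J assume IJ: "I \<in> indep (contract M X) \<and> J \<in> indep (contract M X) \<and> card I < card J"
    then have I: "I \<subseteq> gnd M - X" "I \<union> B \<in> indep M" and J: "J \<subseteq> gnd M - X" "J \<union> B \<in> indep M"
      using indep_iff by blast+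
    have "card (I \<union> B) = card I + card B" "card (J \<union> B) = card J + card B"
      using I J B(1) finite_indep by (auto intro!: card_Un_disjoint)
    then have "card (I \<union> B) < card (J \<union> B)"
      using IJ by simp
    then obtain x where "x \<in> J \<union> B - (I \<union> B)" "insert x (I \<union> B) \<in> indep M"
      using indep_augment[OF I(2) J(2)] by blast
    then show "\<exists>x\<in>J - I. insert x I \<in> indep (contract M X)"
      using I J indep_iff by auto
  qed
qed

lemma rank_contract:
  assumes "X \<subseteq> gnd M" "Y \<subseteq> gnd M - X"
  shows "rank (contract M X) Y + rank M X = rank M (Y \<union> X)"
proof -
  obtain B where B: "B \<subseteq> X" "B \<in> indep M" "card B = rank M X"
    using exists_basis .
  note indep_iff = indep_contract_iff[OF assms(1) B]
  interpret C: matroid "contract M X"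
    using matroid_contract[OF assms(1)] by (rule matroid.intro)
  have rank_Y_X: "rank M (Y \<union> X) = rank M (Y \<union> B)"
    using rank_Un_basis B assms(1) rank_indep by simp
  show ?thesis
  proof (rule antisym)
    obtain Y' where Y': "Y' \<subseteq> Y" "Y' \<in> indep (contract M X)" "card Y' = rank (contract M X) Y"
      using C.exists_basis .
    then have "Y' \<subseteq> gnd M - X" "Y' \<union> B \<in> indep M"
      using indep_iff by blast+
    moreover have "finite (Y' \<union> B)"
      using finite_indep \<open>Y' \<union> B \<in> indep M\<close> .
    moreover have "Y' \<inter> B = {}"
      using \<open>Y' \<subseteq> gnd M - X\<close> B(1) by blast
    ultimately have "card Y' + card B \<le> rank M (Y \<union> B)"
      using card_le_rank[of "Y' \<union> B" "Y \<union> B"] Y'(1) B(1) card_Un_disjoint[of Y' B]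
      by auto
    then show "rank (contract M X) Y + rank M X \<le> rank M (Y \<union> X)"
      using Y'(3) B(3) rank_Y_X by simp
  next
    obtain J where J: "B \<subseteq> J" "J \<subseteq> Y \<union> B" "J \<in> indep M" "card J = rank M (Y \<union> B)"
      using extend_to_basis[of B "Y \<union> B"] B(2) by blast
    have "(J - B) \<union> B = J" "J - B \<subseteq> Y"
      using J(1,2) by blast+
    then have "J - B \<in> indep (contract M X)"
      using indep_iff J(3) assms(2) by auto
    then have "card (J - B) \<le> rank (contract M X) Y"
      using C.card_le_rank \<open>J - B \<subseteq> Y\<close> by blast
    moreover have "card J = card (J - B) + card B"
      using J(1) finite_indep[OF J(3)] card_Diff_subset[of B J] card_mono[of J B] finite_subset
      by fastforce
    ultimately show "rank M (Y \<union> X) \<le> rank (contract M X) Y + rank M X"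
      using J(4) B(3) rank_Y_X by simp
  qed
qed

lemma indep_iff_if_cyclic_flats_comparable:
  assumes comparable: "\<forall>Z. cyclic_flat M Z \<longrightarrow> Z \<subseteq> X \<or> X \<subseteq> Z" and "I \<subseteq> gnd M"
  shows "I \<in> indep M \<longleftrightarrow> I \<inter> X \<in> indep M \<and> card I \<le> rank M (I \<union> X)"
proof
  assume "I \<in> indep M"
  then show "I \<inter> X \<in> indep M \<and> card I \<le> rank M (I \<union> X)"
    using indep_subset card_le_rank[of I "I \<union> X"] by blast
next
  assume I: "I \<inter> X \<in> indep M \<and> card I \<le> rank M (I \<union> X)"
  show "I \<in> indep M"
  proof (rule ccontr)
    assume "I \<notin> indep M"
    then obtain C where C: "C \<subseteq> I" "circuit M C"
      using exists_circuit assms(2) by blast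
    then have "C \<subseteq> cl M C"
      using subset_cl assms(2) by blast
    consider "cl M C \<subseteq> X" | "X \<subseteq> cl M C"
      using comparable cyclic_flat_cl_circuit[OF C(2)] by blast
    then show False
    proof cases
      case 1
      then have "C \<in> indep M"
        using I C(1) \<open>C \<subseteq> cl M C\<close> indep_subset[of "I \<inter> X" C] by blast
      then show False
        using C(2) unfolding circuit_def by blast
    next
      case 2
      then have "X \<subseteq> cl M I"
        using cl_mono[OF C(1)] by blast
      then have "rank M (I \<union> X) = rank M I"
        using rank_Un_cl[of X I] by (simp add: Un_commute)
      also have "\<dots> < card I"
        using \<open>I \<notin> indep M\<close> indep_iff_card_le_rank finite_subset_gnd[OF assms(2)] by simp
      finally show False
        using I by simp
    qed
  qed
qed

lemma free_product_restrict_contract: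
  assumes "X \<subseteq> gnd M" "\<forall>Z. cyclic_flat M Z \<longrightarrow> Z \<subseteq> X \<or> X \<subseteq> Z"
  shows "free_product (restrict M X) (contract M X) = M"
proof (rule matroid_eqI)
  interpret free_product_pair "restrict M X" "contract M X"
    using matroid_restrict matroid_contract assms(1)
    by unfold_locales (auto simp: gnd_restrict gnd_contract)
  show "gnd (free_product (restrict M X) (contract M X)) = gnd M"
    using assms(1) by (auto simp: gnd_free_product gnd_restrict gnd_contract)
  have "I \<in> indep (free_product (restrict M X) (contract M X)) \<longleftrightarrow>
    I \<subseteq> gnd M \<and> I \<inter> X \<in> indep M \<and> card I \<le> rank M (I \<union> X)" for I
  proof (cases "I \<subseteq> gnd M")
    case True
    then have "I \<inter> (gnd M - X) \<union> X = I \<union> X"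
      by blast
    then have "rank (restrict M X) X + rank (contract M X) (I \<inter> (gnd M - X)) = rank M (I \<union> X)"
      using rank_restrict[of X X] rank_contract[OF assms(1), of "I \<inter> (gnd M - X)"] by simp
    then show ?thesis
      using True assms(1) unfolding indep_free_product_iff
      by (auto simp: gnd_restrict gnd_contract indep_restrict)
  next
    case False
    then show ?thesis
      using assms(1) unfolding indep_free_product_iff by (auto simp: gnd_restrict gnd_contract)
  qed
  then show "indep (free_product (restrict M X) (contract M X)) = indep M"
    using indep_iff_if_cyclic_flats_comparable[OF assms(2)] indep_subset_gnd
    by (intro set_eqI) meson
qed

lemma not_irreducible_if_splitting_set:
  assumes "splitting_set M X"
  shows "\<not> irreducible_matroid M"
proof -
  let ?Ns = "[restrict M X, contract M X]"
  have X: "X \<subseteq> gnd M" "X \<noteq> {}" "X \<noteq> gnd M" "\<forall>Z. cyclic_flat M Z \<longrightarrow> Z \<subseteq> X \<or> X \<subseteq> Z"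
    using assms unfolding splitting_set_def by blast+
  have "\<forall>N \<in> set ?Ns. is_matroid N"
    using matroid_restrict matroid_contract X(1) by simp
  moreover have "disjoint_gnds ?Ns"
    unfolding disjoint_gnds_def by (auto simp: less_Suc_eq gnd_restrict gnd_contract)
  moreover have "free_product_list ?Ns = M"
    using free_product_restrict_contract[OF X(1,4)]
      free_product_empty_right[OF matroid_empty_matroid gnd_empty_matroid matroid_contract[OF X(1)]]
    by (simp add: free_product_list_def)
  moreover have "M \<notin> set ?Ns"
  proof -
    have "gnd (restrict M X) \<noteq> gnd M" "gnd (contract M X) \<noteq> gnd M"
      using X(1,2,3) by (auto simp: gnd_restrict gnd_contract)
    then show ?thesis
      by auto
  qed
  ultimately show ?thesis
    unfolding irreducible_matroid_def disjoint_gnds_def by blast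
qed

lemma irreducible_iff_no_splitting_set:
  assumes "gnd M \<noteq> {}"
  shows "irreducible_matroid M \<longleftrightarrow> \<not> (\<exists>X. splitting_set M X)"
proof
  assume "irreducible_matroid M"
  then show "\<not> (\<exists>X. splitting_set M X)"
    using not_irreducible_if_splitting_set by blast
next
  assume no_splitting_set: "\<not> (\<exists>X. splitting_set M X)"
  have "M \<in> set Ns"
    if Ns: "\<forall>N \<in> set Ns. is_matroid N" "disjoint_gnds Ns" "free_product_list Ns = M" for Ns
  proof (rule ccontr)
    assume "M \<notin> set Ns"
    then obtain A B where AB: "free_product_pair A B" "gnd A \<noteq> {}" "gnd B \<noteq> {}"
      and M: "M = free_product A B"
      using free_product_list_split[OF Ns _ assms] by blast
    have "gnd M = gnd A \<union> gnd B" "gnd A \<inter> gnd B = {}"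
      using M free_product_pair.disjoint_gnd[OF AB(1)] by (simp_all add: gnd_free_product)
    then have "splitting_set M (gnd A)"
      unfolding splitting_set_def
      using free_product_pair.cyclic_flat_free_product_comparable[OF AB(1)] M AB(2,3) by blast
    then show False
      using no_splitting_set by blast
  qed
  then show "irreducible_matroid M"
    unfolding irreducible_matroid_def disjoint_gnds_def using assms by blast
qed

end

theorem theorem6p11:
  fixes M :: "'a matroid"
  assumes "is_matroid M"
    and "\<not> uniform_matroid M"
  shows "irreducible_matroid M \<longleftrightarrow>
         \<not> (\<exists>x. pinchpoint (cf_lattice M) x \<and> nontrivial_elem (cf_lattice M) x)"
proof -
  interpret matroid M
    by (rule matroid.intro) (fact assms(1))
  have "gnd M \<noteq> {}"
    using uniform_if_trivial_cyclic_flats cyclic_flat_subset_gnd assms(2) by blast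
  then have "irreducible_matroid M \<longleftrightarrow> \<not> (\<exists>X. splitting_set M X)"
    by (rule irreducible_iff_no_splitting_set)
  also have "\<dots> \<longleftrightarrow> \<not> (\<exists>x. pinchpoint (cf_lattice M) x \<and> nontrivial_elem (cf_lattice M) x)"
    using splitting_set_if_nontrivial_pinchpoint nontrivial_pinchpoint_if_splitting_set[OF _ assms(2)]
    by metis
  finally show ?thesis .
qed

end
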